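(* Let $r\in\mathbb{Z}$, let $P(r)$ be the lower-triangular matrix with $(n,k)$ entry $[x^n]\,\frac{1+rx^2}{1+x^2}\left(\frac{x}{1+x^2}\right)^k$, let $M(r)=P(r)^{-1}$, and let $s_n=s_n(r)=\sum_{k=0}^n M(r)_{n,k}$ be the row sums of $M(r)$. Then for all $n\ge 0$, $$s_n=\sum_{k=0}^{\lfloor \frac{n}{2} \rfloor} \binom{n}{\lfloor \frac{n-2k}{2} \rfloor}(-1)^k r^k.$$
   Context: $[x^n]h(x)$ denotes the coefficient of $x^n$ in $h(x)$. $P(r)$ is the coefficient array of the restricted Chebyshev–Boubaker polynomials and $M(r)$ is its moment matrix, the Riordan array $\left(\frac{\sqrt{1-4x^2}(r-1)+r+1}{2(r+x^2(r-1)^2)}, \frac{1-\sqrt{1-4x^2}}{2x}\right)$. *)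

theory Defs
  imports Complex_Main "HOL-Computational_Algebra.Formal_Power_Series"
begin

definition P_mat :: "int \<Rightarrow> nat \<Rightarrow> nat \<Rightarrow> real" where
  "P_mat r n k = fps_nth ((1 + fps_const (of_int r) * fps_X ^ 2) / (1 + fps_X ^ 2)
                          * (fps_X / (1 + fps_X ^ 2)) ^ k) n"

definition M_mat :: "int \<Rightarrow> nat \<Rightarrow> nat \<Rightarrow> real" where
  "M_mat r = (THE M. (\<forall>n k. n < k \<longrightarrow> M n k = 0) \<and>
                     (\<forall>n k. (\<Sum>j\<le>n. P_mat r n j * M j k) = (if n = k then 1 else 0)))"

end

theory Submission
  imports Defs
begin

unbundle fps_syntax

text \<open>
  \<open>cheb_U n j\<close> is the coefficient of \<open>x^j\<close> in the Chebyshev polynomial \<open>U\<^sub>n(x/2)\<close>, i.e. the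
  \<open>(n,j)\<close> entry of the Riordan array \<open>(1/(1+x^2), x/(1+x^2))\<close>, and
  \<open>P(r)\<^sub>n\<^sub>j = cheb_U n j + r cheb_U (n-2) j\<close>.  Since \<open>P(r)\<close> is unitriangular, the row sums of
  \<open>M(r) = P(r)\<^sup>-\<^sup>1\<close> are the unique solution \<open>s\<close> of \<open>P(r) s = (1,1,1,\<dots>)\<close>, so it suffices to
  check that the closed form solves this system.  Expanding it along the columns
  \<open>binom_col k j = binom j ((j-2k) div 2)\<close>, the key identity is
  \<open>\<Sum>\<^sub>j cheb_U n j \<cdot> binom_col k j = [2k \<le> n]\<close>, proved by induction on \<open>n\<close> from the three-term
  recurrence of \<open>U\<close> and Pascal's rule; the remaining sum \<open>\<Sum>\<^sub>k\<^sub>\<le>\<^sub>n\<^sub>/\<^sub>2 (-r)\<^sup>k\<close> then telescopes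
  against its shift by two rows.
\<close>

fun cheb_U :: "nat \<Rightarrow> nat \<Rightarrow> real" where
  "cheb_U 0 j = (if j = 0 then 1 else 0)"
| "cheb_U (Suc 0) j = (if j = 1 then 1 else 0)"
| "cheb_U (Suc (Suc n)) 0 = - cheb_U n 0"
| "cheb_U (Suc (Suc n)) (Suc j) = cheb_U (Suc n) j - cheb_U n (Suc j)"

lemma cheb_U_above_diag: "n < j \<Longrightarrow> cheb_U n j = 0"
  by (induction n j rule: cheb_U.induct) auto

lemma cheb_U_diag: "cheb_U n n = 1"
  by (induction n rule: induct_nat_012) (simp_all add: cheb_U_above_diag)

lemma cheb_U_odd: "odd (n + j) \<Longrightarrow> cheb_U n j = 0"
  by (induction n j rule: cheb_U.induct) (auto elim: oddE)

lemma fps_nth_divide_one_plus_X2: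
  fixes g :: "'a::field fps"
  shows "(g / (1 + fps_X ^ 2)) $ n = g $ n - (if 2 \<le> n then (g / (1 + fps_X ^ 2)) $ (n - 2) else 0)"
proof -
  have "g = (1 + fps_X ^ 2) * (g / (1 + fps_X ^ 2))"
    by (simp add: fps_divide_unit mult.left_commute[of _ g] inverse_mult_eq_1')
  then have "g $ n = (g / (1 + fps_X ^ 2)) $ n + (fps_X ^ 2 * (g / (1 + fps_X ^ 2))) $ n"
    by (metis distrib_right fps_add_nth mult_1)
  then show ?thesis
    by (simp add: fps_X_power_mult_nth not_le)
qed

lemma fps_nth_cheb_U:
  "((fps_X / (1 + fps_X ^ 2)) ^ j / (1 + fps_X ^ 2) :: real fps) $ n = cheb_U n j"
proof -
  define E :: "real fps" where "E = 1 + fps_X ^ 2"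
  have "E $ 0 \<noteq> 0" by (simp add: E_def)
  then have col_Suc: "(fps_X / E) ^ Suc j / E = fps_X * ((fps_X / E) ^ j / E) / E" for j
    by (simp add: fps_divide_unit algebra_simps)
  have div_E: "(g / E) $ n = g $ n - (if 2 \<le> n then (g / E) $ (n - 2) else 0)" for g n
    unfolding E_def by (rule fps_nth_divide_one_plus_X2)
  have nth_0: "((fps_X / E) ^ j / E) $ 0 = cheb_U 0 j" for j
    by (cases j) (simp_all add: div_E[of _ 0] col_Suc del: power_Suc)
  show ?thesis
    unfolding E_def[symmetric]
  proof (induction n j rule: cheb_U.induct)
    case (1 j)
    show ?case by (rule nth_0)
  next
    case (2 j)
    show ?case
      using nth_0 by (cases j) (simp_all add: div_E[of _ "Suc 0"] col_Suc del: power_Suc)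
  next
    case (3 n)
    then show ?case by (subst div_E) simp
  next
    case (4 n j)
    then show ?case by (subst col_Suc, subst div_E) (simp add: col_Suc[symmetric])
  qed
qed

lemma P_mat_eq_cheb_U:
  "P_mat r n j = cheb_U n j + (if 2 \<le> n then of_int r * cheb_U (n - 2) j else 0)"
proof -
  define E :: "real fps" where "E = 1 + fps_X ^ 2"
  have "E $ 0 \<noteq> 0" by (simp add: E_def)
  then have "P_mat r n j = ((1 + fps_const (of_int r) * fps_X ^ 2) * ((fps_X / E) ^ j / E)) $ n"
    unfolding P_mat_def E_def[symmetric] by (simp add: fps_divide_unit ac_simps)
  then show ?thesis
    unfolding E_def by (simp add: distrib_right mult.assoc fps_X_power_mult_nth fps_nth_cheb_U not_le)
qed

lemma P_mat_diag: "P_mat r n n = 1"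
  by (simp add: P_mat_eq_cheb_U cheb_U_diag cheb_U_above_diag)

lemma sum_cheb_U_extend:
  "n \<le> N \<Longrightarrow> (\<Sum>j\<le>n. cheb_U n j * v j) = (\<Sum>j\<le>N. cheb_U n j * v j)"
  by (rule sum.mono_neutral_left) (auto simp: cheb_U_above_diag)

lemma sum_cheb_U_cong_parity:
  assumes "\<And>j. even (n + j) \<Longrightarrow> v j = v' j"
  shows "(\<Sum>j\<le>n. cheb_U n j * v j) = (\<Sum>j\<le>n. cheb_U n j * v' j)"
proof (rule sum.cong)
  fix j
  show "cheb_U n j * v j = cheb_U n j * v' j"
    using assms[of j] cheb_U_odd[of n j] by (cases "even (n + j)") simp_all
qed simp

lemma sum_cheb_U_recurrence:
  "(\<Sum>j\<le>Suc (Suc m). cheb_U (Suc (Suc m)) j * v j) + (\<Sum>j\<le>m. cheb_U m j * v j)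
     = (\<Sum>j\<le>Suc m. cheb_U (Suc m) j * v (Suc j))"
proof -
  let ?N = "Suc (Suc m)"
  have "(\<Sum>j\<le>m. cheb_U m j * v j) = (\<Sum>j\<le>?N. cheb_U m j * v j)"
    by (rule sum_cheb_U_extend) simp
  moreover have "(\<Sum>j\<le>?N. f j) = f 0 + (\<Sum>j\<le>Suc m. f (Suc j))" for f :: "nat \<Rightarrow> real"
    by (rule sum.atMost_Suc_shift)
  ultimately have "(\<Sum>j\<le>?N. cheb_U ?N j * v j) + (\<Sum>j\<le>m. cheb_U m j * v j)
      = (cheb_U ?N 0 + cheb_U m 0) * v 0
        + (\<Sum>j\<le>Suc m. (cheb_U ?N (Suc j) + cheb_U m (Suc j)) * v (Suc j))"
    by (simp add: distrib_right sum.distrib del: sum.atMost_Suc cheb_U.simps)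
  also have "\<dots> = (\<Sum>j\<le>Suc m. cheb_U (Suc m) j * v (Suc j))"
    by (simp del: sum.atMost_Suc)
  finally show ?thesis .
qed

definition binom_col :: "nat \<Rightarrow> nat \<Rightarrow> nat" where
  "binom_col k j = (if 2 * k \<le> j then j choose ((j - 2 * k) div 2) else 0)"

lemma binom_col_eq_0: "j div 2 < k \<Longrightarrow> binom_col k j = 0"
  by (simp add: binom_col_def)

lemma binom_col_Suc_even:
  assumes "even j"
  shows "binom_col k (Suc j) = binom_col k j + binom_col (Suc k) j"
proof -
  obtain a where j: "j = 2 * a" using assms by (elim evenE)
  consider "k < a" | "k = a" | "a < k" by arith
  then show ?thesis
  proof cases
    case 1
    then obtain i where i: "a - k = Suc i" by (metis Suc_diff_Suc)
    have "(Suc j - 2 * k) div 2 = Suc i" "(j - 2 * k) div 2 = Suc i" "(j - 2 * Suc k) div 2 = i"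
      using i j by arith+
    with 1 j show ?thesis by (simp add: binom_col_def)
  next
    case 2
    then show ?thesis by (simp add: binom_col_def j)
  next
    case 3
    then show ?thesis by (simp add: binom_col_def j)
  qed
qed

text \<open>For \<open>k = 0\<close> the truncated \<open>k - 1 = 0\<close> makes this the symmetry \<open>binom (2a+1) (a+1) = binom (2a+1) a\<close>.\<close>
lemma binom_col_Suc_odd:
  assumes "odd j"
  shows "binom_col k (Suc j) = binom_col k j + binom_col (k - 1) j"
proof -
  obtain a where j: "j = 2 * a + 1" using assms by (elim oddE)
  consider "k = 0" | "0 < k" "k \<le> a" | "k = Suc a" | "Suc a < k" by arith
  then show ?thesis
  proof cases
    case 1
    have "Suc j choose Suc a = (j choose a) + (j choose Suc a)" by simp
    moreover have "j choose Suc a = j choose a"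
      using j by (subst binomial_symmetric) auto
    ultimately show ?thesis using 1 j by (simp add: binom_col_def)
  next
    case 2
    then obtain i where i: "a - k = i" "Suc a - k = Suc i" by (metis Suc_diff_le)
    have "(Suc j - 2 * k) div 2 = Suc i" "(j - 2 * k) div 2 = i" "(j - 2 * (k - 1)) div 2 = Suc i"
      "2 * k \<le> j" "2 * (k - 1) \<le> j"
      using i j 2 by arith+
    with 2 j show ?thesis by (simp add: binom_col_def)
  next
    case 3
    then show ?thesis by (simp add: binom_col_def j)
  next
    case 4
    then show ?thesis by (simp add: binom_col_def j)
  qed
qed

lemma sum_cheb_U_binom_col:
  "(\<Sum>j\<le>n. cheb_U n j * real (binom_col k j)) = (if 2 * k \<le> n then 1 else 0)"
proof (induction n arbitrary: k rule: induct_nat_012)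
  case (ge2 m)
  have pascal_step: "(\<Sum>j\<le>Suc m. cheb_U (Suc m) j * real (binom_col k (Suc j)))
      = (if 2 * k \<le> Suc m then 1 else 0) + (if 2 * k' \<le> Suc m then 1 else 0)"
    if pascal: "\<And>j. even (Suc m + j) \<Longrightarrow> binom_col k (Suc j) = binom_col k j + binom_col k' j" for k'
  proof -
    have "(\<Sum>j\<le>Suc m. cheb_U (Suc m) j * real (binom_col k (Suc j)))
        = (\<Sum>j\<le>Suc m. cheb_U (Suc m) j * (real (binom_col k j) + real (binom_col k' j)))"
      by (rule sum_cheb_U_cong_parity) (simp add: pascal)
    also have "\<dots> = (\<Sum>j\<le>Suc m. cheb_U (Suc m) j * real (binom_col k j))
        + (\<Sum>j\<le>Suc m. cheb_U (Suc m) j * real (binom_col k' j))"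
      by (simp add: distrib_left sum.distrib del: sum.atMost_Suc)
    finally show ?thesis by (simp only: ge2.IH(2))
  qed
  have "(\<Sum>j\<le>Suc m. cheb_U (Suc m) j * real (binom_col k (Suc j)))
      = (if 2 * k \<le> Suc (Suc m) then 1 else 0) + (if 2 * k \<le> m then 1 else 0)"
  proof (cases "even m")
    case True
    have "(\<Sum>j\<le>Suc m. cheb_U (Suc m) j * real (binom_col k (Suc j)))
        = (if 2 * k \<le> Suc m then 1 else 0) + (if 2 * (k - 1) \<le> Suc m then 1 else 0)"
      by (rule pascal_step) (use True in \<open>simp add: binom_col_Suc_odd\<close>)
    moreover have "2 * (k - 1) \<le> Suc m \<longleftrightarrow> 2 * k \<le> Suc (Suc m)" "2 * k \<le> Suc m \<longleftrightarrow> 2 * k \<le> m"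
      using True by presburger+
    ultimately show ?thesis by simp
  next
    case False
    have "(\<Sum>j\<le>Suc m. cheb_U (Suc m) j * real (binom_col k (Suc j)))
        = (if 2 * k \<le> Suc m then 1 else 0) + (if 2 * Suc k \<le> Suc m then 1 else 0)"
      by (rule pascal_step) (use False in \<open>simp add: binom_col_Suc_even\<close>)
    moreover have "2 * k \<le> Suc m \<longleftrightarrow> 2 * k \<le> Suc (Suc m)" "2 * Suc k \<le> Suc m \<longleftrightarrow> 2 * k \<le> m"
      using False by presburger+
    ultimately show ?thesis by simp
  qed
  then show ?case
    using sum_cheb_U_recurrence[of m "\<lambda>j. real (binom_col k j)"] ge2.IH(1)[of k] by simp
qed (simp_all add: binom_col_def)

definition row_sum_formula :: "int \<Rightarrow> nat \<Rightarrow> real" where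
  "row_sum_formula r n = (\<Sum>k\<le>n div 2. real (n choose ((n - 2 * k) div 2)) * (-1) ^ k * of_int r ^ k)"

lemma row_sum_formula_binom_col:
  assumes "n \<le> N"
  shows "row_sum_formula r n = (\<Sum>k\<le>N div 2. (- of_int r) ^ k * real (binom_col k n))"
proof -
  have "(\<Sum>k\<le>N div 2. (- of_int r) ^ k * real (binom_col k n))
      = (\<Sum>k\<le>n div 2. (- of_int r) ^ k * real (binom_col k n))"
    using div_le_mono[OF assms, of 2]
    by (intro sum.mono_neutral_right) (auto simp: binom_col_eq_0)
  also have "\<dots> = row_sum_formula r n"
    unfolding row_sum_formula_def
    by (intro sum.cong refl) (auto simp: binom_col_def power_minus[of "of_int r"])
  finally show ?thesis by simp
qed

lemma sum_cheb_U_row_sum_formula: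
  "(\<Sum>j\<le>n. cheb_U n j * row_sum_formula r j) = (\<Sum>k\<le>n div 2. (- of_int r) ^ k)"
proof -
  have "(\<Sum>j\<le>n. cheb_U n j * row_sum_formula r j)
      = (\<Sum>j\<le>n. \<Sum>k\<le>n div 2. (- of_int r) ^ k * (cheb_U n j * real (binom_col k j)))"
    by (intro sum.cong) (simp_all add: row_sum_formula_binom_col sum_distrib_left ac_simps)
  also have "\<dots> = (\<Sum>k\<le>n div 2. (- of_int r) ^ k * (\<Sum>j\<le>n. cheb_U n j * real (binom_col k j)))"
    by (subst sum.swap) (simp add: sum_distrib_left)
  also have "\<dots> = (\<Sum>k\<le>n div 2. (- of_int r) ^ k)"
    by (intro sum.cong) (auto simp: sum_cheb_U_binom_col)
  finally show ?thesis .
qed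

lemma sum_P_mat_row_sum_formula: "(\<Sum>j\<le>n. P_mat r n j * row_sum_formula r j) = 1"
proof (cases "2 \<le> n")
  case False
  then show ?thesis
    by (simp add: P_mat_eq_cheb_U sum_cheb_U_row_sum_formula del: sum.atMost_Suc)
next
  case True
  then obtain m where n: "n = Suc (Suc m)" by (metis add_2_eq_Suc le_Suc_ex)
  have "(\<Sum>j\<le>n. P_mat r n j * row_sum_formula r j)
      = (\<Sum>j\<le>n. cheb_U n j * row_sum_formula r j + of_int r * (cheb_U m j * row_sum_formula r j))"
    using n by (intro sum.cong refl) (simp add: P_mat_eq_cheb_U algebra_simps)
  also have "\<dots> = (\<Sum>j\<le>n. cheb_U n j * row_sum_formula r j)
      + of_int r * (\<Sum>j\<le>m. cheb_U m j * row_sum_formula r j)"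
    using n by (simp add: sum.distrib sum_distrib_left sum_cheb_U_extend[of m n] del: sum.atMost_Suc)
  also have "\<dots> = (\<Sum>k\<le>Suc (m div 2). (- of_int r) ^ k) + of_int r * (\<Sum>k\<le>m div 2. (- of_int r) ^ k)"
    using n by (simp add: sum_cheb_U_row_sum_formula del: sum.atMost_Suc)
  also have "\<dots> = 1"
    by (simp only: sum.atMost_Suc_shift) (simp add: sum_distrib_left sum_negf)
  finally show ?thesis .
qed

lemma lower_unitriangular_solution_unique:
  fixes Q :: "nat \<Rightarrow> nat \<Rightarrow> 'a::comm_ring_1"
  assumes diag: "\<And>n. Q n n = 1"
    and eq: "\<And>n. (\<Sum>j\<le>n. Q n j * x j) = (\<Sum>j\<le>n. Q n j * y j)"
  shows "x = y"
proof
  fix n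
  show "x n = y n"
  proof (induction n rule: less_induct)
    case (less n)
    have "(\<Sum>j<n. Q n j * x j) = (\<Sum>j<n. Q n j * y j)"
      by (intro sum.cong refl) (simp add: less)
    with eq[of n] show ?case
      by (simp add: lessThan_Suc_atMost[symmetric] diag)
  qed
qed

function unitriangular_inverse :: "(nat \<Rightarrow> nat \<Rightarrow> 'a::comm_ring_1) \<Rightarrow> nat \<Rightarrow> nat \<Rightarrow> 'a" where
  "unitriangular_inverse Q n k =
     (if n < k then 0 else if n = k then 1
      else - (\<Sum>j<n. Q n j * unitriangular_inverse Q j k))"
  by auto
termination by (relation "measure (\<lambda>(Q, n, k). n)") auto

declare unitriangular_inverse.simps [simp del]

lemma unitriangular_inverse_lower: "n < k \<Longrightarrow> unitriangular_inverse Q n k = 0"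
  by (simp add: unitriangular_inverse.simps)

lemma unitriangular_inverse_right_inverse:
  fixes Q :: "nat \<Rightarrow> nat \<Rightarrow> 'a::comm_ring_1"
  assumes "\<And>n. Q n n = 1"
  shows "(\<Sum>j\<le>n. Q n j * unitriangular_inverse Q j k) = (if n = k then 1 else 0)"
proof -
  have split_last: "(\<Sum>j\<le>n. Q n j * unitriangular_inverse Q j k)
      = (\<Sum>j<n. Q n j * unitriangular_inverse Q j k) + unitriangular_inverse Q n k"
    by (simp add: lessThan_Suc_atMost[symmetric] assms)
  show ?thesis
  proof (cases "k < n")
    case True
    then show ?thesis
      by (simp only: split_last) (subst (2) unitriangular_inverse.simps, simp)
  next
    case False
    then have "(\<Sum>j<n. Q n j * unitriangular_inverse Q j k) = 0"
      by (intro sum.neutral) (auto simp: unitriangular_inverse_lower)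
    with False show ?thesis
      by (simp only: split_last) (simp add: unitriangular_inverse.simps)
  qed
qed

lemma M_mat_right_inverse:
  "(\<forall>n k. n < k \<longrightarrow> M_mat r n k = 0) \<and>
   (\<forall>n k. (\<Sum>j\<le>n. P_mat r n j * M_mat r j k) = (if n = k then 1 else 0))"
proof -
  let ?is_inverse = "\<lambda>M. (\<forall>n k. n < k \<longrightarrow> M n k = 0) \<and>
     (\<forall>n k. (\<Sum>j\<le>n. P_mat r n j * M j k) = (if n = k then 1 else 0))"
  let ?inv = "unitriangular_inverse (P_mat r)"
  have inv: "?is_inverse ?inv"
    using unitriangular_inverse_lower unitriangular_inverse_right_inverse[of "P_mat r", OF P_mat_diag]
    by blast
  have "M = ?inv" if "?is_inverse M" for M
  proof -
    have "(\<lambda>j. M j k) = (\<lambda>j. ?inv j k)" for k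
      by (rule lower_unitriangular_solution_unique[of "P_mat r", OF P_mat_diag])
        (use that inv in presburger)
    then show ?thesis by (simp add: fun_eq_iff)
  qed
  then have "?is_inverse (THE M. ?is_inverse M)"
    by (rule theI[where P = ?is_inverse, OF inv])
  then show ?thesis unfolding M_mat_def .
qed

lemma sum_right_inverse_row_sums:
  fixes Q M :: "nat \<Rightarrow> nat \<Rightarrow> 'a::comm_ring_1"
  assumes lower: "\<And>n k. n < k \<Longrightarrow> M n k = 0"
    and inverse: "\<And>n k. (\<Sum>j\<le>n. Q n j * M j k) = (if n = k then 1 else 0)"
  shows "(\<Sum>j\<le>n. Q n j * (\<Sum>k\<le>j. M j k)) = 1"
proof -
  have "(\<Sum>j\<le>n. Q n j * (\<Sum>k\<le>j. M j k)) = (\<Sum>j\<le>n. \<Sum>k\<le>n. Q n j * M j k)"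
  proof (intro sum.cong refl)
    fix j
    assume "j \<in> {..n}"
    then have "(\<Sum>k\<le>j. M j k) = (\<Sum>k\<le>n. M j k)"
      by (intro sum.mono_neutral_left) (auto simp: lower)
    then show "Q n j * (\<Sum>k\<le>j. M j k) = (\<Sum>k\<le>n. Q n j * M j k)"
      by (simp add: sum_distrib_left)
  qed
  also have "\<dots> = (\<Sum>k\<le>n. if n = k then 1 else 0)"
    by (subst sum.swap) (simp add: inverse)
  finally show ?thesis by simp
qed

theorem mainTheorem5:
  fixes r :: int and n :: nat
  shows "(\<Sum>k\<le>n. M_mat r n k) =
         (\<Sum>k\<le>n div 2. real (n choose ((n - 2 * k) div 2)) * (-1) ^ k * (of_int r) ^ k)"
proof -
  have lower: "\<And>n k. n < k \<Longrightarrow> M_mat r n k = 0"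
    and inverse: "\<And>n k. (\<Sum>j\<le>n. P_mat r n j * M_mat r j k) = (if n = k then 1 else 0)"
    using M_mat_right_inverse by blast+
  have "(\<lambda>n. \<Sum>k\<le>n. M_mat r n k) = row_sum_formula r"
    by (rule lower_unitriangular_solution_unique[of "P_mat r"])
      (simp_all only: P_mat_diag sum_right_inverse_row_sums[OF lower inverse] sum_P_mat_row_sum_formula)
  then show ?thesis by (simp add: fun_eq_iff row_sum_formula_def)
qed

end
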